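(* Let $k\ge1$ be an integer, $\rho\ne0$ real, $0\le q<1$, and $z$ a complex number. Then, as formal power series in $t$, $$\frac{1}{(1+\rho t)^{z/\rho}}\,{\rm Lif}_{k,q}\!\left(\frac{\ln(1+\rho t)}{\rho}\right)=\sum_{n=0}^\infty c_{n,\rho,q}^{(k)}(z)\frac{t^n}{n!},$$ where $(1+\rho t)^{-z/\rho}=\exp\!\big(-\tfrac{z}{\rho}\ln(1+\rho t)\big)$.
   Context: For real $0\le q<1$ (with $0^0=1$), $[x]_q=\frac{1-q^x}{1-q}$. The $q$-polyfactorial function is ${\rm Lif}_{k,q}(w)=\sum_{n=0}^\infty\frac{w^n}{n!\,[n+1]_q^k}$. Jackson's $q$-integral: $\int_0^1 f(x)\,d_qx=(1-q)\sum_{j\ge0} f(q^j)q^j$; multiple integrals are iterated. $(x)_n=x(x-1)\cdots(x-n+1)$, $(x)_0=1$. The $q$-poly-Cauchy polynomials of the first kind with parameter $\rho$ are $c_{n,\rho,q}^{(k)}(z)=\rho^n\int_0^1\cdots\int_0^1\left(\frac{x_1\cdots x_k-z}{\rho}\right)_n d_qx_1\cdots d_qx_k$ ($k$-fold). *)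

theory Defs
  imports "HOL-Analysis.Analysis" "HOL-Computational_Algebra.Formal_Power_Series"
begin

definition qnum :: "real \<Rightarrow> nat \<Rightarrow> real" where
  "qnum q x = (1 - q ^ x) / (1 - q)"

definition falling :: "complex \<Rightarrow> nat \<Rightarrow> complex" where
  "falling x n = (\<Prod>i<n. x - of_nat i)"

definition jackson_int :: "real \<Rightarrow> (real \<Rightarrow> complex) \<Rightarrow> complex" where
  "jackson_int q f = complex_of_real (1 - q) * (\<Sum>j. f (q ^ j) * complex_of_real (q ^ j))"

fun jackson_multi :: "real \<Rightarrow> nat \<Rightarrow> (real list \<Rightarrow> complex) \<Rightarrow> complex" where
  "jackson_multi q 0 F = F []"
| "jackson_multi q (Suc k) F = jackson_int q (\<lambda>x. jackson_multi q k (\<lambda>xs. F (x # xs)))"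

definition qpoly_cauchy1 :: "nat \<Rightarrow> real \<Rightarrow> real \<Rightarrow> nat \<Rightarrow> complex \<Rightarrow> complex" where
  "qpoly_cauchy1 k \<rho> q n z = complex_of_real (\<rho> ^ n) *
     jackson_multi q k (\<lambda>xs. falling ((complex_of_real (prod_list xs) - z) / complex_of_real \<rho>) n)"

definition Lif_fps :: "nat \<Rightarrow> real \<Rightarrow> complex fps" where
  "Lif_fps k q = Abs_fps (\<lambda>n. 1 / (fact n * complex_of_real (qnum q (n + 1) ^ k)))"

definition ln1p_fps :: "real \<Rightarrow> complex fps" where
  "ln1p_fps \<rho> = fps_ln 1 oo (fps_const (complex_of_real \<rho>) * fps_X)"

end

theory Submission
  imports Defs
begin

text \<open>
  Put \<open>L = ln(1 + \<rho> t) / \<rho>\<close>. The series \<open>(1 + \<rho> t)^((x - z)/\<rho>) = (1 + \<rho> t)^(-z/\<rho>) exp(x L)\<close>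
  has \<open>n\<close>-th coefficient \<open>\<rho>^n ((x - z)/\<rho>)\<^sub>n / n!\<close>, a polynomial in \<open>x\<close> whose coefficient
  of \<open>x^m\<close> is the \<open>n\<close>-th coefficient of \<open>(1 + \<rho> t)^(-z/\<rho>) L^m / m!\<close>. Substituting
  \<open>x = x\<^sub>1\<cdots>x\<^sub>k\<close> and taking the \<open>k\<close>-fold Jackson integral replaces \<open>x^m\<close> by
  \<open>1 / [m+1]\<^sub>q^k\<close>, i.e. it turns \<open>exp(x L)\<close> into \<open>Lif\<^sub>k\<^sub>,\<^sub>q(L)\<close>.
\<close>

lemma fps_exp_compose_scaled:
  fixes L :: "'a::field_char_0 fps"
  assumes "fps_nth L 0 = 0"
  shows "fps_exp c oo (fps_const a * L) = fps_exp (a * c) oo L"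
proof -
  have "fps_const a * L = (fps_const a * fps_X) oo L"
    by (simp add: fps_compose_mult_distrib assms)
  then show ?thesis
    by (simp add: fps_compose_assoc assms)
qed

lemma fps_mult_compose_nth:
  fixes E L :: "'a::comm_ring_1 fps"
  assumes "fps_nth L 0 = 0"
  shows "fps_nth (E * (f oo L)) n = (\<Sum>m\<in>{0..n}. fps_nth f m * fps_nth (E * L ^ m) n)"
proof -
  have "fps_nth (E * (f oo L)) n
      = (\<Sum>i\<in>{0..n}. \<Sum>m\<in>{0..n}. fps_nth E i * (fps_nth f m * fps_nth (L ^ m) (n - i)))"
    unfolding fps_mult_nth fps_compose_nth sum_distrib_left
    by (intro sum.cong refl sum.mono_neutral_left)
       (auto simp: startsby_zero_power_prefix [OF assms])
  also have "\<dots> = (\<Sum>m\<in>{0..n}. fps_nth f m * fps_nth (E * L ^ m) n)"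
    by (subst sum.swap) (simp add: fps_mult_nth sum_distrib_left mult_ac)
  finally show ?thesis .
qed

lemma fps_exp_compose_fps_ln:
  "fps_exp (c::'a::field_char_0) oo fps_ln 1 = fps_binomial c"
proof -
  let ?a = "fps_exp c oo fps_ln 1"
  have "fps_deriv ?a = fps_const c * ?a * inverse (1 + fps_X)"
    by (simp add: fps_compose_deriv fps_compose_mult_distrib fps_ln_deriv)
  also have "\<dots> = fps_const c * ?a / (1 + fps_X)"
    by (simp add: fps_divide_unit' subdegree_eq_0_iff)
  finally show ?thesis
    by (subst fps_binomial_ODE_unique' [symmetric]) simp
qed

lemma fps_nth_ln1p_fps_0 [simp]: "fps_nth (ln1p_fps \<rho>) 0 = 0"
  by (simp add: ln1p_fps_def)

lemma fps_nth_exp_compose_ln1p_fps: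
  "fps_nth (fps_exp w oo ln1p_fps \<rho>) n = complex_of_real \<rho> ^ n * falling w n / fact n"
proof -
  have "fps_exp w oo ln1p_fps \<rho> = fps_binomial w oo (fps_const (complex_of_real \<rho>) * fps_X)"
    unfolding ln1p_fps_def fps_exp_compose_fps_ln [symmetric] by (rule fps_compose_assoc) auto
  then show ?thesis
    unfolding fps_compose_linear using gbinomial_mult_fact [of n w]
    by (simp add: falling_def atLeast0LessThan field_simps)
qed

lemma falling_ln1p_fps_expansion:
  "complex_of_real \<rho> ^ n * falling ((complex_of_real y - z) / complex_of_real \<rho>) n / fact n
     = (\<Sum>m\<in>{0..n}. fps_nth ((fps_exp (- z / complex_of_real \<rho>) oo ln1p_fps \<rho>) *
                               (fps_const (1 / complex_of_real \<rho>) * ln1p_fps \<rho>) ^ m) n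
                      / fact m * complex_of_real y ^ m)"
proof -
  define L where "L = ln1p_fps \<rho>"
  define M where "M = fps_const (1 / complex_of_real \<rho>) * L"
  have "fps_exp ((complex_of_real y - z) / complex_of_real \<rho>) oo L
      = (fps_exp (- z / complex_of_real \<rho>) * fps_exp (complex_of_real y / complex_of_real \<rho>)) oo L"
    by (simp add: fps_exp_add_mult [symmetric] diff_divide_distrib)
  also have "\<dots> = (fps_exp (- z / complex_of_real \<rho>) oo L) * (fps_exp (complex_of_real y) oo M)"
    by (simp add: M_def L_def fps_compose_mult_distrib fps_exp_compose_scaled)
  finally show ?thesis
    unfolding fps_nth_exp_compose_ln1p_fps [symmetric] L_def M_def
    by (simp add: fps_mult_compose_nth mult_ac)
qed

lemma jackson_int_monomial_sum:
  assumes "0 \<le> q" "q < 1"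
  shows "jackson_int q (\<lambda>x. \<Sum>m\<in>S. b m * complex_of_real x ^ m)
       = (\<Sum>m\<in>S. b m / complex_of_real (qnum q (Suc m)))"
proof -
  have "(\<lambda>j. b m * complex_of_real (q ^ j) ^ m * complex_of_real (q ^ j))
          sums (b m / complex_of_real (1 - q ^ Suc m))" for m
  proof -
    have "(\<lambda>j. (q ^ Suc m) ^ j) sums (1 / (1 - q ^ Suc m))"
      using assms power_le_one[of q m]
      by (intro geometric_sums) (auto intro: le_less_trans[OF mult_left_le])
    from sums_mult[OF sums_of_real[OF this], of "b m"] show ?thesis
      by (simp add: power_mult [symmetric] power_mult_distrib mult_ac)
  qed
  then have "(\<lambda>j. (\<Sum>m\<in>S. b m * complex_of_real (q ^ j) ^ m) * complex_of_real (q ^ j))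
          sums (\<Sum>m\<in>S. b m / complex_of_real (1 - q ^ Suc m))"
    unfolding sum_distrib_right by (rule sums_sum)
  then show ?thesis
    using assms
    by (simp add: jackson_int_def sums_unique[symmetric] qnum_def sum_distrib_left mult_ac)
qed

lemma jackson_multi_monomial_sum:
  assumes "0 \<le> q" "q < 1"
  shows "jackson_multi q k (\<lambda>xs. \<Sum>m\<in>S. a m * complex_of_real (prod_list xs) ^ m)
       = (\<Sum>m\<in>S. a m / complex_of_real (qnum q (Suc m) ^ k))"
proof -
  have "jackson_multi q k (\<lambda>xs. \<Sum>m\<in>S. a m * complex_of_real (y * prod_list xs) ^ m)
      = (\<Sum>m\<in>S. a m * complex_of_real y ^ m / complex_of_real (qnum q (Suc m) ^ k))" for y
  proof (induction k arbitrary: y)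
    case 0
    then show ?case by simp
  next
    case (Suc k)
    have "jackson_multi q (Suc k) (\<lambda>xs. \<Sum>m\<in>S. a m * complex_of_real (y * prod_list xs) ^ m)
        = jackson_int q (\<lambda>x. \<Sum>m\<in>S. (a m * complex_of_real y ^ m / complex_of_real (qnum q (Suc m) ^ k))
                                        * complex_of_real x ^ m)"
      by (simp only: jackson_multi.simps prod_list.Cons mult.assoc [symmetric] Suc.IH)
         (simp add: power_mult_distrib mult_ac)
    also have "\<dots> = (\<Sum>m\<in>S. a m * complex_of_real y ^ m / complex_of_real (qnum q (Suc m) ^ Suc k))"
      unfolding jackson_int_monomial_sum[OF assms] by (simp add: mult_ac)
    finally show ?case .
  qed
  from this[of 1] show ?thesis by simp
qed

theorem theorem3:
  fixes k :: nat and \<rho> q :: real and z :: complex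
  assumes "k \<ge> 1" and "\<rho> \<noteq> 0" and "0 \<le> q" and "q < 1"
  shows "(fps_exp (- z / complex_of_real \<rho>) oo ln1p_fps \<rho>) *
           (Lif_fps k q oo (fps_const (1 / complex_of_real \<rho>) * ln1p_fps \<rho>))
         = Abs_fps (\<lambda>n. qpoly_cauchy1 k \<rho> q n z / fact n)"
proof -
  define E where "E = fps_exp (- z / complex_of_real \<rho>) oo ln1p_fps \<rho>"
  define M where "M = fps_const (1 / complex_of_real \<rho>) * ln1p_fps \<rho>"
  define b where "b n m = fps_nth (E * M ^ m) n / fact m" for n m
  have falling_expansion: "falling ((complex_of_real y - z) / complex_of_real \<rho>) n
      = (\<Sum>m\<in>{0..n}. fact n / complex_of_real (\<rho> ^ n) * b n m * complex_of_real y ^ m)" for n y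
  proof -
    have "falling ((complex_of_real y - z) / complex_of_real \<rho>) n
        = fact n / complex_of_real (\<rho> ^ n) * (\<Sum>m\<in>{0..n}. b n m * complex_of_real y ^ m)"
      using falling_ln1p_fps_expansion [of \<rho> n y z, folded E_def M_def] assms(2)
      by (simp add: b_def field_simps)
    then show ?thesis
      by (simp add: sum_distrib_left mult.assoc)
  qed
  have cauchy_coeff: "qpoly_cauchy1 k \<rho> q n z / fact n
      = (\<Sum>m\<in>{0..n}. b n m / complex_of_real (qnum q (Suc m) ^ k))" for n
    unfolding qpoly_cauchy1_def falling_expansion jackson_multi_monomial_sum [OF assms(3,4)]
    using assms(2) by (simp add: sum_distrib_left field_simps)
  have lif_coeff: "fps_nth (E * (Lif_fps k q oo M)) n
      = (\<Sum>m\<in>{0..n}. b n m / complex_of_real (qnum q (Suc m) ^ k))" for n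
    by (simp add: fps_mult_compose_nth M_def Lif_fps_def b_def field_simps)
  show ?thesis
    unfolding fps_eq_iff E_def [symmetric] M_def [symmetric] by (simp add: cauchy_coeff lif_coeff)
qed

end
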